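(* Let $f$ be a multiplicative function from the positive integers to the nonnegative integers with $f(p^{k-1})\le f(p^k)$ for all primes $p$ and integers $k\ge1$. A squarefree positive integer is $f$-practical if and only if it is weakly $f$-practical.
   Context: $f$ multiplicative means $f(1)=1$ and $f(ab)=f(a)f(b)$ for coprime $a,b$. $S_f(n)=\sum_{d\mid n} f(d)$. A positive integer $n$ is $f$-practical if every positive integer $m\le S_f(n)$ equals $\sum_{d\in\mathcal{D}}f(d)$ for some set $\mathcal{D}$ of distinct divisors of $n$. Write $n=p_1^{e_1}\cdots p_k^{e_k}$ with distinct primes ordered so that $f(p_1)\le\cdots\le f(p_k)$, and let $m_i=\prod_{j=1}^{i}p_j^{e_j}$ for $0\le i<k$ ($m_0=1$). Then $n$ is weakly $f$-practical if $f(p_{i+1})\le S_f(m_i)+1$ for every $0\le i<k$. *)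

theory Defs
  imports "HOL-Computational_Algebra.Computational_Algebra"
begin

definition multiplicative_fn :: "(nat \<Rightarrow> nat) \<Rightarrow> bool" where
  "multiplicative_fn f \<longleftrightarrow> f 1 = 1 \<and>
     (\<forall>a b. 0 < a \<longrightarrow> 0 < b \<longrightarrow> coprime a b \<longrightarrow> f (a * b) = f a * f b)"

definition S_f :: "(nat \<Rightarrow> nat) \<Rightarrow> nat \<Rightarrow> nat" where
  "S_f f n = (\<Sum>d\<in>{d. d dvd n}. f d)"

definition f_practical :: "(nat \<Rightarrow> nat) \<Rightarrow> nat \<Rightarrow> bool" where
  "f_practical f n \<longleftrightarrow> 0 < n \<and>
     (\<forall>m. 1 \<le> m \<and> m \<le> S_f f n \<longrightarrow>
        (\<exists>D. D \<subseteq> {d. d dvd n} \<and> m = (\<Sum>d\<in>D. f d)))"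

definition f_prime_ordering :: "(nat \<Rightarrow> nat) \<Rightarrow> nat \<Rightarrow> nat list \<Rightarrow> bool" where
  "f_prime_ordering f n ps \<longleftrightarrow> distinct ps \<and> set ps = prime_factors n \<and> sorted (map f ps)"

text \<open>m_i = prod_{j<i} p_j^{e_j} (with 0-indexed list, m_0 = 1).\<close>
definition m_part :: "nat \<Rightarrow> nat list \<Rightarrow> nat \<Rightarrow> nat" where
  "m_part n ps i = (\<Prod>j<i. (ps ! j) ^ multiplicity (ps ! j) n)"

definition weakly_f_practical :: "(nat \<Rightarrow> nat) \<Rightarrow> nat \<Rightarrow> bool" where
  "weakly_f_practical f n \<longleftrightarrow> 0 < n \<and>
     (\<forall>ps. f_prime_ordering f n ps \<longrightarrow>
        (\<forall>i < length ps. f (ps ! i) \<le> S_f f (m_part n ps i) + 1))"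

end

theory Submission
  imports Defs
begin

text \<open>For squarefree \<open>n\<close> only the values \<open>f p \<ge> f 1 = 1\<close> at primes matter, and
  \<open>S_f f (m * p) = (1 + f p) * S_f f m\<close> for a prime \<open>p\<close> not dividing \<open>m\<close>.
  Sufficiency: if all values up to \<open>S_f f m\<close> are sums of \<open>f\<close> over distinct divisors of \<open>m\<close>
  and \<open>f p \<le> S_f f m + 1\<close>, the same holds for \<open>m * p\<close>; adjoin the primes in the given order.
  Necessity: \<open>f q \<le> f d\<close> for every prime \<open>q\<close> dividing a squarefree \<open>d\<close>, so if
  \<open>f p\<^sub>i\<^sub>+\<^sub>1 > S_f f m\<^sub>i + 1\<close>, every divisor \<open>d\<close> of \<open>n\<close> with
  \<open>f d \<le> S_f f m\<^sub>i + 1\<close> is built from \<open>p\<^sub>1, \<dots>, p\<^sub>i\<close>, i.e. divides \<open>m\<^sub>i\<close>;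
  hence \<open>S_f f m\<^sub>i + 1\<close> is not such a sum.\<close>

lemma multiplicative_fn_mult_prime:
  assumes "multiplicative_fn f" "prime p" "\<not> p dvd m" "0 < m"
  shows "f (p * m) = f p * f m"
  using assms by (simp add: multiplicative_fn_def prime_gt_0_nat prime_imp_coprime)

lemma squarefree_imp_pos_nat: "squarefree (n::nat) \<Longrightarrow> 0 < n"
  by (metis gr0I not_squarefree_0)

lemma squarefree_mult_prime_not_dvd:
  fixes p m :: nat
  assumes "squarefree (p * m)" "prime p"
  shows "\<not> p dvd m"
proof
  assume "p dvd m"
  then have "p ^ 2 dvd p * m" by (simp add: power2_eq_square)
  then have "p dvd 1" using squarefreeD[OF assms(1)] by blast
  with assms(2) show False by simp
qed

lemma squarefree_imp_f_pos:
  assumes mult: "multiplicative_fn f" and prime_pos: "\<And>p. prime p \<Longrightarrow> 0 < f p"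
  shows "squarefree d \<Longrightarrow> 0 < f d"
proof (induction d rule: prime_divisors_induct)
  case (unit d)
  then show ?case using mult by (simp add: multiplicative_fn_def)
next
  case (factor p d)
  have "\<not> p dvd d" "squarefree d"
    using squarefree_mult_prime_not_dvd squarefree_multD factor.prems factor.hyps by blast+
  moreover have "0 < d" using \<open>squarefree d\<close> by (rule squarefree_imp_pos_nat)
  ultimately show ?case
    using factor multiplicative_fn_mult_prime[OF mult] prime_pos by simp
qed simp

lemma squarefree_f_prime_le:
  assumes mult: "multiplicative_fn f" and prime_pos: "\<And>p. prime p \<Longrightarrow> 0 < f p"
    and "squarefree d" "prime q" "q dvd d"
  shows "f q \<le> f d"
proof -
  obtain e where d: "d = q * e" using \<open>q dvd d\<close> by blast
  then have "squarefree e" "\<not> q dvd e"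
    using assms squarefree_multD squarefree_mult_prime_not_dvd by blast+
  then have "0 < f e" "0 < e"
    using squarefree_imp_f_pos[OF mult prime_pos] squarefree_imp_pos_nat by auto
  then show ?thesis
    using d multiplicative_fn_mult_prime[OF mult \<open>prime q\<close> \<open>\<not> q dvd e\<close>] by simp
qed

lemma squarefree_dvdI:
  fixes d m :: nat
  assumes "squarefree d" "m \<noteq> 0" "\<And>q. prime q \<Longrightarrow> q dvd d \<Longrightarrow> q dvd m"
  shows "d dvd m"
proof (rule multiplicity_le_imp_dvd)
  show "d \<noteq> 0" using squarefree_imp_pos_nat assms(1) by simp
  fix q :: nat assume q: "prime q"
  show "multiplicity q d \<le> multiplicity q m"
  proof (cases "q dvd d")
    case True
    then have "multiplicity q m \<ge> 1"
      using assms q by (simp add: Suc_le_eq prime_multiplicity_gt_zero_iff)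
    moreover have "multiplicity q d \<le> 1"
      using assms(1) \<open>d \<noteq> 0\<close> q squarefree_factorial_semiring'' by blast
    ultimately show ?thesis by linarith
  qed (simp add: not_dvd_imp_multiplicity_0)
qed

lemma divisors_mult_prime:
  fixes m p :: nat
  assumes "0 < m" "prime p" "\<not> p dvd m"
  shows "{d. d dvd m * p} = {d. d dvd m} \<union> (\<lambda>d. p * d) ` {d. d dvd m}"
proof (intro equalityI subsetI)
  fix d assume "d \<in> {d. d dvd m * p}"
  then have d: "d dvd m * p" by simp
  show "d \<in> {d. d dvd m} \<union> (\<lambda>d. p * d) ` {d. d dvd m}"
  proof (cases "p dvd d")
    case True
    then obtain e where "d = p * e" by blast
    with d assms(2) show ?thesis by (auto simp: mult.commute prime_gt_0_nat)
  next
    case False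
    then have "coprime d p" using assms(2) prime_imp_coprime coprime_commute by blast
    with d have "d dvd m" by (simp add: coprime_dvd_mult_left_iff)
    then show ?thesis by simp
  qed
qed auto

lemma sum_divisors_mult_prime:
  assumes mult: "multiplicative_fn f" and "0 < (m::nat)" "prime p" "\<not> p dvd m"
    and D: "D1 \<subseteq> {d. d dvd m}" "D2 \<subseteq> {d. d dvd m}"
  shows "sum f (D1 \<union> (\<lambda>d. p * d) ` D2) = sum f D1 + f p * sum f D2"
proof -
  have fin: "finite D1" "finite D2"
    using D \<open>0 < m\<close> finite_divisors_nat finite_subset by blast+
  have "D1 \<inter> (\<lambda>d. p * d) ` D2 = {}"
    using D \<open>\<not> p dvd m\<close> by (auto dest: dvd_mult_left)
  then have "sum f (D1 \<union> (\<lambda>d. p * d) ` D2) = sum f D1 + sum f ((\<lambda>d. p * d) ` D2)"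
    using fin by (simp add: sum.union_disjoint)
  also have "sum f ((\<lambda>d. p * d) ` D2) = (\<Sum>d\<in>D2. f (p * d))"
    using \<open>prime p\<close> by (simp add: sum.reindex inj_on_def prime_gt_0_nat)
  also have "\<dots> = (\<Sum>d\<in>D2. f p * f d)"
  proof (rule sum.cong)
    fix d assume "d \<in> D2"
    then have "d dvd m" using D by blast
    then have "\<not> p dvd d" "0 < d" using assms by (auto intro: dvd_trans gr0I)
    then show "f (p * d) = f p * f d" using multiplicative_fn_mult_prime[OF mult \<open>prime p\<close>] by simp
  qed simp
  finally show ?thesis by (simp add: sum_distrib_left)
qed

lemma S_f_mult_prime:
  assumes "multiplicative_fn f" "0 < (m::nat)" "prime p" "\<not> p dvd m"
  shows "S_f f (m * p) = S_f f m + f p * S_f f m"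
  unfolding S_f_def divisors_mult_prime[OF assms(2-4)]
  using sum_divisors_mult_prime[OF assms, of "{d. d dvd m}" "{d. d dvd m}"] by simp

lemma f_practical_iff:
  "f_practical f n \<longleftrightarrow> 0 < n \<and> (\<forall>s \<le> S_f f n. \<exists>D \<subseteq> {d. d dvd n}. s = sum f D)"
proof -
  have "\<exists>D \<subseteq> {d. d dvd n}. 0 = sum f D" by (intro exI[of _ "{}"]) simp
  then show ?thesis unfolding f_practical_def by (metis le_0_eq less_one not_le)
qed

lemma f_practical_1:
  assumes "multiplicative_fn f"
  shows "f_practical f 1"
  using assms by (auto simp: f_practical_def S_f_def multiplicative_fn_def intro!: exI[of _ "{1}"])

text \<open>Every \<open>s \<le> S_f f (m * p)\<close> is written as \<open>b + f p * a\<close> with \<open>a, b \<le> S_f f m\<close>: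
  take \<open>a\<close> as large as possible; the bound on \<open>f p\<close> keeps the remainder \<open>b\<close> small enough.\<close>
lemma f_practical_mult_prime:
  assumes mult: "multiplicative_fn f" and prac: "f_practical f m"
    and p: "prime p" "\<not> p dvd m" and fp: "0 < f p" "f p \<le> S_f f m + 1"
  shows "f_practical f (m * p)"
proof -
  have m: "0 < m" and rep: "\<forall>s \<le> S_f f m. \<exists>D \<subseteq> {d. d dvd m}. s = sum f D"
    using prac by (auto simp: f_practical_iff)
  have "\<exists>D \<subseteq> {d. d dvd m * p}. s = sum f D" if s: "s \<le> S_f f (m * p)" for s
  proof -
    define a where "a = min (S_f f m) (s div f p)"
    define b where "b = s - f p * a"
    have a: "a \<le> S_f f m" unfolding a_def by simp
    have "f p * a \<le> f p * (s div f p)" by (simp add: a_def)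
    also have "\<dots> \<le> s" by simp
    finally have fa: "f p * a \<le> s" .
    have b: "b \<le> S_f f m"
    proof (cases "s div f p \<le> S_f f m")
      case True
      then have "b = s mod f p" by (simp add: a_def b_def minus_mult_div_eq_mod)
      with fp show ?thesis using mod_less_divisor[of "f p" s] by linarith
    next
      case False
      then show ?thesis using s S_f_mult_prime[OF mult m p] by (simp add: a_def b_def)
    qed
    obtain D1 D2 where D: "D1 \<subseteq> {d. d dvd m}" "b = sum f D1" "D2 \<subseteq> {d. d dvd m}" "a = sum f D2"
      using rep a b by meson
    have "s = sum f (D1 \<union> (\<lambda>d. p * d) ` D2)"
      using sum_divisors_mult_prime[OF mult m p D(1,3)] D fa by (simp add: b_def)
    moreover have "D1 \<union> (\<lambda>d. p * d) ` D2 \<subseteq> {d. d dvd m * p}"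
      using divisors_mult_prime[OF m p] D by blast
    ultimately show ?thesis by blast
  qed
  with m p show ?thesis by (simp add: f_practical_iff prime_gt_0_nat)
qed

lemma f_prime_ordering_exists: "\<exists>ps. f_prime_ordering f n ps"
  by (auto simp: f_prime_ordering_def intro: exI[of _ "sort_key f (sorted_list_of_set (prime_factors n))"])

lemma f_prime_ordering_nth:
  assumes "f_prime_ordering f n ps" "i < length ps"
  shows "prime (ps ! i)" "ps ! i dvd n" "n \<noteq> 0"
  using assms nth_mem[of i ps] by (auto simp: f_prime_ordering_def in_prime_factors_iff)

lemma m_part_pos:
  assumes "f_prime_ordering f n ps" "i \<le> length ps"
  shows "0 < m_part n ps i"
  using assms f_prime_ordering_nth(1) unfolding m_part_def
  by (intro prod_pos) (auto simp: prime_gt_0_nat)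

lemma m_part_Suc: "m_part n ps (Suc i) = m_part n ps i * ps ! i ^ multiplicity (ps ! i) n"
  by (simp add: m_part_def)

lemma m_part_length:
  assumes "f_prime_ordering f n ps" "0 < n"
  shows "m_part n ps (length ps) = n"
proof -
  have "distinct ps" using assms(1) by (simp add: f_prime_ordering_def)
  then have "m_part n ps (length ps) = (\<Prod>p\<in>set ps. p ^ multiplicity p n)"
    unfolding m_part_def
    using prod.reindex_bij_betw[OF bij_betw_nth, of ps "{..<length ps}" "set ps" "\<lambda>p. p ^ multiplicity p n"]
    by simp
  also have "\<dots> = n"
    using assms prod_prime_factors[of n] by (simp add: f_prime_ordering_def)
  finally show ?thesis .
qed

lemma nth_dvd_m_part:
  assumes "f_prime_ordering f n ps" "j < i" "i \<le> length ps"
  shows "ps ! j dvd m_part n ps i"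
proof -
  have "prime (ps ! j)" "ps ! j dvd n" "n \<noteq> 0"
    using assms f_prime_ordering_nth[of f n ps j] by auto
  then have "ps ! j dvd ps ! j ^ multiplicity (ps ! j) n"
    by (simp add: prime_multiplicity_gt_zero_iff)
  also have "\<dots> dvd m_part n ps i"
    unfolding m_part_def using assms(2) by (intro dvd_prodI) auto
  finally show ?thesis .
qed

lemma nth_not_dvd_m_part:
  assumes ord: "f_prime_ordering f n ps" and i: "i < length ps"
  shows "\<not> ps ! i dvd m_part n ps i"
proof
  assume "ps ! i dvd m_part n ps i"
  then obtain j where j: "j < i" "ps ! i dvd ps ! j ^ multiplicity (ps ! j) n"
    using f_prime_ordering_nth(1)[OF ord i] by (auto simp: m_part_def prime_dvd_prod_iff)
  then have "ps ! i = ps ! j"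
    using f_prime_ordering_nth(1)[OF ord] i
    by (metis order.strict_trans prime_dvd_power primes_dvd_imp_eq)
  with j i ord show False by (simp add: f_prime_ordering_def nth_eq_iff_index_eq)
qed

lemma multiplicity_squarefree_prime:
  fixes n p :: nat
  assumes "squarefree n" "prime p" "p dvd n"
  shows "multiplicity p n = 1"
proof -
  have "n \<noteq> 0" using squarefree_imp_pos_nat assms(1) by simp
  then have "multiplicity p n \<le> 1" "0 < multiplicity p n"
    using assms squarefree_factorial_semiring'' by (auto simp: prime_multiplicity_gt_zero_iff)
  then show ?thesis by simp
qed

lemma squarefree_dvd_m_part_if_f_less:
  assumes mult: "multiplicative_fn f" and prime_pos: "\<And>p. prime p \<Longrightarrow> 0 < f p"
    and ord: "f_prime_ordering f n ps" and "squarefree n" "d dvd n"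
    and i: "i < length ps" and less: "f d < f (ps ! i)"
  shows "d dvd m_part n ps i"
proof (rule squarefree_dvdI)
  show "squarefree d" using squarefree_mono assms by blast
  show "m_part n ps i \<noteq> 0" using m_part_pos[OF ord] i by simp
  fix q assume q: "prime q" "q dvd d"
  then have "q \<in> set ps"
    using ord \<open>d dvd n\<close> squarefree_imp_pos_nat[OF \<open>squarefree n\<close>]
    by (auto simp: f_prime_ordering_def in_prime_factors_iff intro: dvd_trans)
  then obtain j where j: "j < length ps" "q = ps ! j" by (metis in_set_conv_nth)
  have "f q < f (ps ! i)"
    using squarefree_f_prime_le[OF mult prime_pos \<open>squarefree d\<close> q] less by simp
  then have "j < i"
    using ord j sorted_nth_mono[of "map f ps" i j] by (force simp: f_prime_ordering_def)
  then show "q dvd m_part n ps i" using nth_dvd_m_part[OF ord _ less_imp_le[OF i]] j by simp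
qed

lemma f_practical_imp_weakly_f_practical:
  assumes mult: "multiplicative_fn f" and prime_pos: "\<And>p. prime p \<Longrightarrow> 0 < f p"
    and "squarefree n" and prac: "f_practical f n"
  shows "weakly_f_practical f n"
  unfolding weakly_f_practical_def
proof (intro conjI allI impI)
  show n: "0 < n" using prac by (simp add: f_practical_def)
  fix ps i assume ord: "f_prime_ordering f n ps" and i: "i < length ps"
  define M where "M = m_part n ps i"
  show "f (ps ! i) \<le> S_f f M + 1"
  proof (rule ccontr)
    assume big: "\<not> f (ps ! i) \<le> S_f f M + 1"
    have "f (ps ! i) \<le> S_f f n"
      unfolding S_f_def using f_prime_ordering_nth(2)[OF ord i] n by (intro member_le_sum) auto
    then obtain D where D: "D \<subseteq> {d. d dvd n}" "S_f f M + 1 = sum f D"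
      using big prac unfolding f_practical_def by (metis le_add2 nat_le_linear order.trans)
    have "finite D" using D(1) n finite_divisors_nat finite_subset by blast
    have "D \<subseteq> {d. d dvd M}"
    proof
      fix d assume "d \<in> D"
      then have "f d < f (ps ! i)"
        using D(2) big member_le_sum[OF \<open>d \<in> D\<close> _ \<open>finite D\<close>, of f] by simp
      then show "d \<in> {d. d dvd M}"
        using squarefree_dvd_m_part_if_f_less[OF mult prime_pos ord \<open>squarefree n\<close> _ i] D(1) \<open>d \<in> D\<close>
        by (auto simp: M_def)
    qed
    moreover have "finite {d. d dvd M}" using m_part_pos[OF ord] i by (simp add: M_def)
    ultimately have "sum f D \<le> S_f f M" unfolding S_f_def by (simp add: sum_mono2)
    with D(2) show False by simp
  qed
qed

lemma weakly_f_practical_imp_f_practical: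
  assumes mult: "multiplicative_fn f" and prime_pos: "\<And>p. prime p \<Longrightarrow> 0 < f p"
    and "squarefree n" and weak: "weakly_f_practical f n"
  shows "f_practical f n"
proof -
  have n: "0 < n" using weak by (simp add: weakly_f_practical_def)
  obtain ps where ord: "f_prime_ordering f n ps" using f_prime_ordering_exists by blast
  have "f_practical f (m_part n ps i)" if "i \<le> length ps" for i
    using that
  proof (induction i)
    case 0
    then show ?case using f_practical_1[OF mult] by (simp add: m_part_def)
  next
    case (Suc i)
    then have i: "i < length ps" by simp
    have p: "prime (ps ! i)" "ps ! i dvd n" using f_prime_ordering_nth[OF ord i] by auto
    have "f (ps ! i) \<le> S_f f (m_part n ps i) + 1"
      using weak ord i by (simp add: weakly_f_practical_def)
    then have "f_practical f (m_part n ps i * ps ! i)"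
      using f_practical_mult_prime[OF mult] Suc i p prime_pos nth_not_dvd_m_part[OF ord i] by simp
    then show ?case
      using multiplicity_squarefree_prime[OF \<open>squarefree n\<close> p] by (simp add: m_part_Suc)
  qed
  then show ?thesis using m_part_length[OF ord n] by force
qed

theorem corollary2p6:
  fixes f :: "nat \<Rightarrow> nat" and n :: nat
  assumes "multiplicative_fn f"
    and "\<And>p k. prime p \<Longrightarrow> 1 \<le> k \<Longrightarrow> f (p ^ (k - 1)) \<le> f (p ^ k)"
    and "0 < n" and "squarefree n"
  shows "f_practical f n \<longleftrightarrow> weakly_f_practical f n"
proof -
  have prime_pos: "0 < f p" if "prime p" for p
    using assms(1) assms(2)[OF that, of 1] by (simp add: multiplicative_fn_def)
  show ?thesis
    using f_practical_imp_weakly_f_practical[OF assms(1) prime_pos assms(4)]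
      weakly_f_practical_imp_f_practical[OF assms(1) prime_pos assms(4)] by blast
qed

end
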